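(* Let $H$ be an almost-breakable semigroup and let $x,y\in H$. Then: (i) the principal two-sided ideals $HzH$ ($z\in H$) form a chain under set inclusion; (ii) if $HxH\subsetneq HyH$, then $xyx=x$ and $xy\simeq_H yx\simeq_H x$; (iii) if $x\simeq_H y$, then $\{xy,yx\}=\{x,y\}$; (iv) there are no elements $x,y,z\in H$ with $HxH\subsetneq HyH$ and $HxH\subsetneq HzH$ such that $xy\neq x$ and $zx\neq x$; (v) if $HxH\subsetneq HyH$, $yx\neq x$, and $x'\in H$ satisfies $x\simeq_H x'$, then $x'y=x'$.
   Context: A semigroup $H$ is almost-breakable if for all $x,y\in H$, $xy\in\{x,y\}$ or $yx\in\{x,y\}$. For $z\in H$, $HzH=\{uzv:u,v\in H\}$, and $x\simeq_H y$ means $HxH=HyH$. *)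

theory Defs
  imports Main
begin

text \<open>A semigroup H is modelled as a type of class semigroup_mult (H = UNIV).\<close>

definition almost_breakable :: "'a::semigroup_mult itself \<Rightarrow> bool" where
  "almost_breakable _ \<longleftrightarrow> (\<forall>x y :: 'a. x * y \<in> {x, y} \<or> y * x \<in> {x, y})"

definition pideal :: "'a::semigroup_mult \<Rightarrow> 'a set" where
  "pideal z = {u * z * v | u v. True}"

definition Hequiv :: "'a::semigroup_mult \<Rightarrow> 'a \<Rightarrow> bool" where
  "Hequiv x y \<longleftrightarrow> pideal x = pideal y"

end

theory Submission
  imports Defs
begin

(* Taking x = y in the definition shows that every element is idempotent, so H is a band.
   In a band, zw and wz lie in both HzH and HwH; almost-breakability makes one of them equal
   to z or w, so principal ideals are comparable, and for HxH strictly below HyH it forces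
   xy = x or yx = x. The J-classes of a band are rectangular (xyx = x when x and y generate
   the same ideal); together with the four-way case split given by almost-breakability this
   settles the remaining claims by short equational arguments. *)

lemma mem_pideal: "u * b * v \<in> pideal b"
  unfolding pideal_def by blast

lemma pideal_subset_if_mem:
  fixes a b :: "'a::semigroup_mult"
  assumes "a \<in> pideal b"
  shows "pideal a \<subseteq> pideal b"
proof
  obtain u v where a: "a = u * b * v"
    using assms unfolding pideal_def by blast
  fix w assume "w \<in> pideal a"
  then obtain s t where "w = s * a * t"
    unfolding pideal_def by blast
  then have "w = (s * u) * b * (v * t)"
    using a by (simp add: mult.assoc)
  then show "w \<in> pideal b"
    using mem_pideal by metis
qed

lemma idem_mem_pideal:
  fixes z :: "'a::semigroup_mult"
  assumes "z * z = z"
  shows "z \<in> pideal z"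
  using mem_pideal[of z z z] assms by simp

lemma mult_mem_pideal_left:
  fixes z w :: "'a::semigroup_mult"
  assumes "z * z = z"
  shows "z * w \<in> pideal z"
  using mem_pideal[of z z w] assms by simp

lemma mult_mem_pideal_right:
  fixes z w :: "'a::semigroup_mult"
  assumes "w * w = w"
  shows "z * w \<in> pideal w"
  using mem_pideal[of z w w] assms by (simp add: mult.assoc)

lemma idem_pideal_subset_iff:
  fixes a b :: "'a::semigroup_mult"
  assumes "a * a = a"
  shows "pideal a \<subseteq> pideal b \<longleftrightarrow> a \<in> pideal b"
  using idem_mem_pideal[OF assms] pideal_subset_if_mem by blast

lemma band_absorb_sides:
  fixes e x f :: "'a::semigroup_mult"
  assumes idem: "\<And>z :: 'a. z * z = z" and x: "x = e * x * f"
  shows "e * x = x" "x * f = x"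
proof -
  have "e * x = e * (e * x * f)"
    by (subst (1) x) (rule refl)
  also have "\<dots> = (e * e) * x * f"
    by (simp add: mult.assoc)
  finally show "e * x = x"
    using idem by (simp add: x[symmetric])
  have "x * f = (e * x * f) * f"
    by (subst (1) x) (rule refl)
  also have "\<dots> = e * x * (f * f)"
    by (simp add: mult.assoc)
  finally show "x * f = x"
    using idem by (simp add: x[symmetric])
qed

lemma band_Hequiv_rectangular:
  fixes x y :: "'a::semigroup_mult"
  assumes idem: "\<And>z :: 'a. z * z = z" and "Hequiv x y"
  shows "x * y * x = x"
proof -
  obtain u v where xu: "x = u * y * v"
    using \<open>Hequiv x y\<close> idem_mem_pideal[OF idem] unfolding Hequiv_def pideal_def by blast
  obtain s t where ys: "y = s * x * t"
    using \<open>Hequiv x y\<close> idem_mem_pideal[OF idem] unfolding Hequiv_def pideal_def by blast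
  have "x = (u * s) * x * (t * v)"
    using xu ys by (simp add: mult.assoc)
  then have left: "u * s * x = x" and right: "x * (t * v) = x"
    using band_absorb_sides[OF idem] by blast+
  have "x * s * x = (u * s * x) * s * x"
    using left by simp
  also have "\<dots> = u * ((s * x) * (s * x))"
    by (simp add: mult.assoc)
  also have "\<dots> = x"
    using left idem by (simp add: mult.assoc)
  finally have xsx: "x * s * x = x" .
  have "x * t * x = x * t * (x * (t * v))"
    using right by simp
  also have "\<dots> = ((x * t) * (x * t)) * v"
    by (simp add: mult.assoc)
  also have "\<dots> = x"
    using right idem by (simp add: mult.assoc)
  finally have xtx: "x * t * x = x" .
  have "x * y * x = (x * s * x) * t * x"
    using ys by (simp add: mult.assoc)
  also have "\<dots> = x"
    using xsx xtx by simp
  finally show ?thesis .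
qed

lemma rectangular_pair_products:
  fixes x y :: "'a::semigroup_mult"
  assumes "x * y * x = x" "y * x * y = y" and "x * y \<in> {x, y} \<or> y * x \<in> {x, y}"
  shows "{x * y, y * x} = {x, y}"
proof -
  consider "x * y = x" | "x * y = y" | "y * x = x" | "y * x = y"
    using assms(3) by blast
  then show ?thesis
  proof cases
    case 1
    then have "y * x = y" using assms(2) by (simp add: mult.assoc)
    with 1 show ?thesis by simp
  next
    case 2
    then have "y * x = x" using assms(1) by simp
    with 2 show ?thesis by auto
  next
    case 3
    then have "x * y = y" using assms(2) by simp
    with 3 show ?thesis by auto
  next
    case 4
    then have "x * y = x" using assms(1) by (simp add: mult.assoc)
    with 4 show ?thesis by auto
  qed
qed

context
  assumes ab: "almost_breakable TYPE('a::semigroup_mult)"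
begin

lemma almost_breakableD: "x * y \<in> {x, y} \<or> y * x \<in> {x, y}" for x y :: 'a
  using ab unfolding almost_breakable_def by blast

lemma almost_breakable_idem: "x * x = x" for x :: 'a
  using almost_breakableD[of x x] by auto

lemma almost_breakable_Hequiv_iff:
  "Hequiv x y \<longleftrightarrow> x \<in> pideal y \<and> y \<in> pideal x" for x y :: 'a
  unfolding Hequiv_def
  using idem_pideal_subset_iff[OF almost_breakable_idem] by blast

lemma almost_breakable_pideal_linear:
  "pideal z \<subseteq> pideal w \<or> pideal w \<subseteq> pideal z" for z w :: 'a
proof -
  have "z * w \<in> pideal z \<inter> pideal w" "w * z \<in> pideal z \<inter> pideal w"
    by (simp_all add: mult_mem_pideal_left mult_mem_pideal_right almost_breakable_idem)
  then have "z \<in> pideal w \<or> w \<in> pideal z"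
    using almost_breakableD[of z w] by auto
  then show ?thesis
    using pideal_subset_if_mem by blast
qed

lemma almost_breakable_psubset_absorb:
  fixes a b :: 'a
  assumes "pideal a \<subset> pideal b"
  shows "a * b = a \<or> b * a = a"
proof -
  have "b \<notin> pideal a"
    using assms pideal_subset_if_mem by blast
  moreover have "a * b \<in> pideal a" "b * a \<in> pideal a"
    by (simp_all add: mult_mem_pideal_left mult_mem_pideal_right almost_breakable_idem)
  ultimately show ?thesis
    using almost_breakableD[of a b] by auto
qed

lemma almost_breakable_psubset_sandwich:
  fixes a b :: 'a
  assumes "pideal a \<subset> pideal b"
  shows "a * b * a = a"
  using almost_breakable_psubset_absorb[OF assms]
  by (metis almost_breakable_idem mult.assoc)

lemma almost_breakable_psubset_Hequiv:
  fixes a b :: 'a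
  assumes "pideal a \<subset> pideal b"
  shows "Hequiv (a * b) a" "Hequiv (b * a) a"
proof -
  have aba: "a * b * a = a"
    using almost_breakable_psubset_sandwich[OF assms] .
  have "a \<in> pideal (a * b)"
    using mult_mem_pideal_left[OF almost_breakable_idem, of "a * b" a] aba by simp
  then show "Hequiv (a * b) a"
    by (simp add: almost_breakable_Hequiv_iff mult_mem_pideal_left almost_breakable_idem)
  have "a \<in> pideal (b * a)"
    using mult_mem_pideal_right[OF almost_breakable_idem, of a "b * a"] aba
    by (simp add: mult.assoc)
  then show "Hequiv (b * a) a"
    by (simp add: almost_breakable_Hequiv_iff mult_mem_pideal_right almost_breakable_idem)
qed

lemma almost_breakable_Hequiv_products:
  fixes x y :: 'a
  assumes "Hequiv x y"
  shows "{x * y, y * x} = {x, y}"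
proof (rule rectangular_pair_products)
  show "x * y * x = x" "y * x * y = y"
    using band_Hequiv_rectangular[OF almost_breakable_idem] assms
    by (auto simp: Hequiv_def)
  show "x * y \<in> {x, y} \<or> y * x \<in> {x, y}"
    by (rule almost_breakableD)
qed

lemma almost_breakable_psubset_absorb_right_or_left:
  fixes a b c :: 'a
  assumes "pideal a \<subset> pideal b" "pideal a \<subset> pideal c"
  shows "a * b = a \<or> c * a = a"
proof -
  define p q where "p = a * b" and "q = c * a"
  have pa: "p * a = a" and aq: "a * q = a"
    unfolding p_def q_def
    using almost_breakable_psubset_sandwich[OF assms(1)]
      almost_breakable_psubset_sandwich[OF assms(2)] by (simp_all add: mult.assoc)
  have ap: "a * p = p"
    unfolding p_def by (simp add: almost_breakable_idem flip: mult.assoc)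
  have qa: "q * a = q"
    unfolding q_def by (simp add: almost_breakable_idem mult.assoc)
  consider "p * q = p" | "p * q = q" | "q * p = p" | "q * p = q"
    using almost_breakableD[of p q] by blast
  then have "p = a \<or> q = a"
  proof cases
    case 1
    have "p * (q * a) = a" using 1 pa by (simp flip: mult.assoc)
    then show ?thesis using 1 qa by simp
  next
    case 2
    have "q = a * p * q" using 2 ap by simp
    then show ?thesis using 2 aq by (simp add: mult.assoc)
  next
    case 3
    have "a = q * p * a" using 3 pa by simp
    then show ?thesis using pa qa by (simp add: mult.assoc)
  next
    case 4
    have "a * (q * p) = p" using ap aq by (simp flip: mult.assoc)
    then show ?thesis using 4 aq by simp
  qed
  then show ?thesis
    unfolding p_def q_def by blast
qed

lemma almost_breakable_Hequiv_right_absorb: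
  fixes x y x' :: 'a
  assumes below: "pideal x \<subset> pideal y" and "y * x \<noteq> x" and "Hequiv x x'"
  shows "x' * y = x'"
proof -
  have xy: "x * y = x"
    using almost_breakable_psubset_absorb[OF below] \<open>y * x \<noteq> x\<close> by blast
  show ?thesis
  proof (cases "x' * x = x'")
    case True
    then show ?thesis
      using xy by (metis mult.assoc)
  next
    case False
    define p where "p = y * x"
    have "{x * x', x' * x} = {x, x'}"
      using almost_breakable_Hequiv_products[OF \<open>Hequiv x x'\<close>] .
    with False have xx': "x * x' = x'"
      by (metis almost_breakable_idem doubleton_eq_iff)
    have "Hequiv p x'"
      using almost_breakable_psubset_Hequiv(2)[OF below] \<open>Hequiv x x'\<close>
      unfolding p_def Hequiv_def by simp
    then have "x' * p \<in> {p, x'}"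
      using almost_breakable_Hequiv_products by blast
    moreover have "x' * p \<noteq> p"
    proof
      assume "x' * p = p"
      then have "p = x * p"
        using xx' by (metis mult.assoc)
      also have "\<dots> = x"
        unfolding p_def using xy almost_breakable_idem by (simp flip: mult.assoc)
      finally show False
        using \<open>y * x \<noteq> x\<close> p_def by simp
    qed
    ultimately have "x' * y * x = x'"
      unfolding p_def by (simp add: mult.assoc)
    \<comment> \<open>Right multiplication by y fixes x' * y * x because x * y = x.\<close>
    then show ?thesis
      using xy by (metis mult.assoc)
  qed
qed

end

theorem lemma4p1:
  fixes x y :: "'a::semigroup_mult"
  assumes "almost_breakable TYPE('a)"
  shows "(\<forall>z w :: 'a. pideal z \<subseteq> pideal w \<or> pideal w \<subseteq> pideal z)
    \<and> (pideal x \<subset> pideal y \<longrightarrow> x * y * x = x \<and> Hequiv (x * y) (y * x) \<and> Hequiv (y * x) x)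
    \<and> (Hequiv x y \<longrightarrow> {x * y, y * x} = {x, y})
    \<and> \<not> (\<exists>a b c :: 'a. pideal a \<subset> pideal b \<and> pideal a \<subset> pideal c \<and> a * b \<noteq> a \<and> c * a \<noteq> a)
    \<and> (\<forall>x' :: 'a. pideal x \<subset> pideal y \<and> y * x \<noteq> x \<and> Hequiv x x' \<longrightarrow> x' * y = x')"
proof (intro conjI allI impI notI)
  fix z w :: 'a
  show "pideal z \<subseteq> pideal w \<or> pideal w \<subseteq> pideal z"
    using almost_breakable_pideal_linear[OF assms] .
next
  assume below: "pideal x \<subset> pideal y"
  show "x * y * x = x"
    using almost_breakable_psubset_sandwich[OF assms below] .
  show "Hequiv (x * y) (y * x)" "Hequiv (y * x) x"
    using almost_breakable_psubset_Hequiv[OF assms below] unfolding Hequiv_def by simp_all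
next
  assume "Hequiv x y"
  then show "{x * y, y * x} = {x, y}"
    using almost_breakable_Hequiv_products[OF assms] by blast
next
  assume "\<exists>a b c :: 'a. pideal a \<subset> pideal b \<and> pideal a \<subset> pideal c \<and> a * b \<noteq> a \<and> c * a \<noteq> a"
  then show False
    using almost_breakable_psubset_absorb_right_or_left[OF assms] by blast
next
  fix x' :: 'a
  assume "pideal x \<subset> pideal y \<and> y * x \<noteq> x \<and> Hequiv x x'"
  then show "x' * y = x'"
    using almost_breakable_Hequiv_right_absorb[OF assms] by blast
qed

end
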